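(* Let $A$ be a simply laced hyperbolic generalized Cartan matrix with node set $I$, $n=|I|-1$. Let $\phi$ be any facet of the projectivized Weyl chamber $PC$ and $p$ any point of $\phi$. Then there is a facet $\phi'$ of $PC$ making dihedral angle $\pi/3$ with $\phi$ such that the hyperbolic distance $d(p,\phi\cap\phi')\leq\cosh^{-1}\sqrt{4/3}$.
   Context: $A=(a_{ij})_{i,j\in I}$ is simply laced ($a_{ii}=2$, $a_{ij}\in\{0,-1\}$ for $i\ne j$) and hyperbolic (connected Dynkin diagram, not of finite or affine type, every proper connected subdiagram of finite or affine type). Let $\Lambda=\bigoplus_i\mathbb{Z}\alpha_i$ with symmetric form $\alpha_i\cdot\alpha_j=a_{ij}$; then $\Lambda\otimes\mathbb{R}$ has signature $(n,1)$. The fundamental chamber is $C=\{x\in\Lambda\otimes\mathbb{R}: x\cdot\alpha_i\le0\text{ for all }i\}$; the vectors of negative norm form two components, and the future cone $F$ is the one that $C$ meets. Its projectivization $PF$ is hyperbolic $n$-space $H^n$, with distance between points represented by $x,y\in F$ given by $\cosh^{-1}\sqrt{(x\cdot y)^2/(x^2y^2)}$. $C$ lies in the closure $\overline F$, and its projectivization $PC$ is a hyperbolic simplex (together with its ideal vertices) in $\overline{H^n}$, whose facets are $\phi_i=PC\cap P(\alpha_i^\perp)$, $i\in I$; facets $\phi_i,\phi_j$ ($i\ne j$) meet at angle $\pi/3$ exactly when $a_{ij}=-1$ and at angle $\pi/2$ when $a_{ij}=0$. *)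

theory Defs
  imports Complex_Main
begin

text \<open>Vectors of the real span of the simple roots are functions 'i => real
  (coordinates w.r.t. the basis alpha_i).\<close>

definition simply_laced :: "('i \<Rightarrow> 'i \<Rightarrow> int) \<Rightarrow> bool" where
  "simply_laced A \<longleftrightarrow> (\<forall>i. A i i = 2) \<and> (\<forall>i j. i \<noteq> j \<longrightarrow> A i j \<in> {0, -1}) \<and> (\<forall>i j. A i j = A j i)"

definition dynkin_edge :: "('i \<Rightarrow> 'i \<Rightarrow> int) \<Rightarrow> 'i \<Rightarrow> 'i \<Rightarrow> bool" where
  "dynkin_edge A i j \<longleftrightarrow> i \<noteq> j \<and> A i j \<noteq> 0"

definition connected_sub :: "('i \<Rightarrow> 'i \<Rightarrow> int) \<Rightarrow> 'i set \<Rightarrow> bool" where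
  "connected_sub A J \<longleftrightarrow> J \<noteq> {} \<and>
     (\<forall>i\<in>J. \<forall>j\<in>J. (i, j) \<in> {(k, l). k \<in> J \<and> l \<in> J \<and> dynkin_edge A k l}\<^sup>*)"

text \<open>Kac's classification of an indecomposable GCM (restricted to J):
  finite type iff there is u > 0 with A u > 0; affine type iff there is u > 0 with A u = 0.\<close>
definition finite_type :: "('i \<Rightarrow> 'i \<Rightarrow> int) \<Rightarrow> 'i set \<Rightarrow> bool" where
  "finite_type A J \<longleftrightarrow> (\<exists>u :: 'i \<Rightarrow> real. (\<forall>i\<in>J. u i > 0) \<and>
      (\<forall>i\<in>J. (\<Sum>j\<in>J. real_of_int (A i j) * u j) > 0))"

definition affine_type :: "('i \<Rightarrow> 'i \<Rightarrow> int) \<Rightarrow> 'i set \<Rightarrow> bool" where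
  "affine_type A J \<longleftrightarrow> (\<exists>u :: 'i \<Rightarrow> real. (\<forall>i\<in>J. u i > 0) \<and>
      (\<forall>i\<in>J. (\<Sum>j\<in>J. real_of_int (A i j) * u j) = 0))"

definition hyperbolic :: "('i::finite \<Rightarrow> 'i \<Rightarrow> int) \<Rightarrow> bool" where
  "hyperbolic A \<longleftrightarrow> connected_sub A UNIV \<and> \<not> finite_type A UNIV \<and> \<not> affine_type A UNIV \<and>
     (\<forall>J. J \<subset> UNIV \<longrightarrow> connected_sub A J \<longrightarrow> finite_type A J \<or> affine_type A J)"

definition bform :: "('i::finite \<Rightarrow> 'i \<Rightarrow> int) \<Rightarrow> ('i \<Rightarrow> real) \<Rightarrow> ('i \<Rightarrow> real) \<Rightarrow> real" where
  "bform A x y = (\<Sum>i\<in>UNIV. \<Sum>j\<in>UNIV. x i * real_of_int (A i j) * y j)"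

definition simple_root :: "'i \<Rightarrow> ('i \<Rightarrow> real)" where
  "simple_root i = (\<lambda>j. if j = i then 1 else 0)"

definition chamber :: "('i::finite \<Rightarrow> 'i \<Rightarrow> int) \<Rightarrow> ('i \<Rightarrow> real) set" where
  "chamber A = {x. \<forall>i. bform A x (simple_root i) \<le> 0}"

text \<open>Representatives in C of the (non-ideal) points of H^n lying in the facet phi_i of PC.\<close>
definition facet_pts :: "('i::finite \<Rightarrow> 'i \<Rightarrow> int) \<Rightarrow> 'i \<Rightarrow> ('i \<Rightarrow> real) set" where
  "facet_pts A i = {x \<in> chamber A. bform A x x < 0 \<and> bform A x (simple_root i) = 0}"

definition hdist :: "('i::finite \<Rightarrow> 'i \<Rightarrow> int) \<Rightarrow> ('i \<Rightarrow> real) \<Rightarrow> ('i \<Rightarrow> real) \<Rightarrow> real" where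
  "hdist A x y = arcosh (sqrt ((bform A x y)\<^sup>2 / (bform A x x * bform A y y)))"

end

theory Submission
  imports Defs "HOL-Analysis.Analysis"
begin

text \<open>
  The facet \<open>\<phi>\<^sub>i\<close> through \<open>p\<close> meets the facets \<open>\<phi>\<^sub>j\<close> of the neighbours \<open>j\<close> of \<open>i\<close>.
  Choose the neighbour \<open>j\<close> for which \<open>m = -p\<cdot>\<alpha>\<^sub>j \<ge> 0\<close> is smallest and move \<open>p\<close> along
  \<open>r = \<alpha>\<^sub>j + \<alpha>\<^sub>i/2\<close>, which is orthogonal to \<open>\<alpha>\<^sub>i\<close>: the point \<open>q = p + (2m/3) r\<close> lies on
  \<open>\<phi>\<^sub>i \<inter> \<phi>\<^sub>j\<close>, and \<open>p\<cdot>q = q\<cdot>q = p\<cdot>p - 2m\<^sup>2/3\<close>, so \<open>cosh\<^sup>2 d(p,q) = 1 + 2m\<^sup>2/(3|p\<cdot>p|)\<close>.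
  It remains to see \<open>|p\<cdot>p| \<ge> 2m\<^sup>2\<close>: writing \<open>p = a + m b\<close> with \<open>b = \<alpha>\<^sub>i - 2\<omega>\<^sub>i\<close>
  (\<open>\<omega>\<^sub>i\<close> the fundamental weight), both \<open>a\<close> and \<open>b\<close> lie in the chamber, \<open>b\<cdot>b \<le> -2\<close>, and any
  two chamber vectors have nonpositive product.

  The last fact rests on the form being positive semidefinite on every coordinate
  hyperplane, because every proper connected subdiagram is of finite or affine type.
\<close>

lemma sum_nonpos_eq_0_iff:
  fixes f :: "'a \<Rightarrow> real"
  assumes "finite S" "\<And>x. x \<in> S \<Longrightarrow> f x \<le> 0"
  shows "sum f S = 0 \<longleftrightarrow> (\<forall>x\<in>S. f x = 0)"
  using sum_nonneg_eq_0_iff[OF assms(1), of "\<lambda>x. - f x"] assms(2) by (simp add: sum_negf)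

lemma arcosh_mono_le:
  fixes x y :: real
  assumes "1 \<le> x" "x \<le> y"
  shows "arcosh x \<le> arcosh y"
  using arcosh_less_iff_real[of y x] assms by linarith

subsection \<open>The bilinear form\<close>

lemma bform_simple_root_right: "bform A x (simple_root k) = (\<Sum>i\<in>UNIV. x i * real_of_int (A i k))"
  unfolding bform_def simple_root_def by (simp add: if_distrib cong: if_cong)

lemma bform_simple_root_left: "bform A (simple_root k) y = (\<Sum>j\<in>UNIV. real_of_int (A k j) * y j)"
proof -
  have "bform A (simple_root k) y
      = (\<Sum>i\<in>UNIV. if i = k then (\<Sum>j\<in>UNIV. real_of_int (A i j) * y j) else 0)"
    unfolding bform_def simple_root_def by (rule sum.cong) auto
  then show ?thesis by simp
qed

lemma bform_simple_roots: "bform A (simple_root k) (simple_root l) = real_of_int (A k l)"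
  unfolding bform_simple_root_left by (simp add: simple_root_def if_distrib cong: if_cong)

lemma bform_expand_left: "bform A x y = (\<Sum>k\<in>UNIV. x k * bform A (simple_root k) y)"
  unfolding bform_simple_root_left unfolding bform_def by (simp add: sum_distrib_left mult.assoc)

lemma bform_expand_right: "bform A x y = (\<Sum>k\<in>UNIV. y k * bform A x (simple_root k))"
  unfolding bform_simple_root_right unfolding bform_def
  by (subst sum.swap) (simp add: sum_distrib_left sum_distrib_right mult_ac)

lemma bform_linear_left: "bform A (\<lambda>k. a * x k + b * y k) z = a * bform A x z + b * bform A y z"
  unfolding bform_def by (simp add: sum.distrib sum_distrib_left algebra_simps)

lemma bform_linear_right: "bform A z (\<lambda>k. a * x k + b * y k) = a * bform A z x + b * bform A z y"
  unfolding bform_def by (simp add: sum.distrib sum_distrib_left algebra_simps)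

lemma bform_commute:
  assumes "\<And>i j. A i j = A j i"
  shows "bform A x y = bform A y x"
  unfolding bform_def by (subst sum.swap) (simp add: assms mult_ac)

lemma bform_uminus_left: "bform A (\<lambda>k. - x k) y = - bform A x y"
  unfolding bform_def by (simp add: sum_negf)

lemma bform_square_combination:
  assumes "\<And>i j. A i j = A j i"
  shows "bform A (\<lambda>k. s * x k + t * y k) (\<lambda>k. s * x k + t * y k)
     = s\<^sup>2 * bform A x x + 2 * s * t * bform A x y + t\<^sup>2 * bform A y y"
  unfolding bform_linear_left bform_linear_right using bform_commute[OF assms, where x=x and y=y]
  by (simp add: algebra_simps power2_eq_square)

subsection \<open>Semidefiniteness on proper subdiagrams\<close>

definition restricted_form :: "('i \<Rightarrow> 'i \<Rightarrow> int) \<Rightarrow> 'i set \<Rightarrow> ('i \<Rightarrow> real) \<Rightarrow> real" where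
  "restricted_form A S v = (\<Sum>k\<in>S. \<Sum>l\<in>S. v k * real_of_int (A k l) * v l)"

lemma bform_eq_restricted_form: "bform A v v = restricted_form A UNIV v"
  unfolding bform_def restricted_form_def ..

lemma restricted_form_nonneg:
  fixes A :: "'i \<Rightarrow> 'i \<Rightarrow> int"
  assumes sym: "\<And>i j. A i j = A j i" and off: "\<And>i j. i \<noteq> j \<Longrightarrow> A i j \<le> 0"
    and "finite S" and u_pos: "\<And>k. k \<in> S \<Longrightarrow> u k > 0"
    and Au: "\<And>k. k \<in> S \<Longrightarrow> (\<Sum>l\<in>S. real_of_int (A k l) * u l) \<ge> 0"
  shows "restricted_form A S v \<ge> 0"
proof -
  define t where "t k = v k / u k" for k
  define a where "a k l = real_of_int (A k l) * u k * u l" for k l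
  \<comment> \<open>With \<open>v = u t\<close>: \<open>v\<^sup>TAv = \<Sum>\<^sub>k t\<^sub>k\<^sup>2 u\<^sub>k (Au)\<^sub>k - \<onehalf>\<Sum>\<^sub>k\<^sub>l a\<^sub>k\<^sub>l (t\<^sub>k - t\<^sub>l)\<^sup>2\<close>, and \<open>a\<^sub>k\<^sub>l \<le> 0\<close> for \<open>k \<noteq> l\<close>.\<close>
  define F where "F = (\<Sum>k\<in>S. \<Sum>l\<in>S. a k l * (t k)\<^sup>2)"
  have "(\<Sum>k\<in>S. \<Sum>l\<in>S. a k l * (t k - t l)\<^sup>2) \<le> 0"
  proof (intro sum_nonpos)
    fix k l assume "k \<in> S" "l \<in> S"
    then show "a k l * (t k - t l)\<^sup>2 \<le> 0"
      using off[of k l] u_pos[of k] u_pos[of l]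
      by (cases "k = l") (auto simp: a_def intro!: mult_nonpos_nonneg)
  qed
  moreover have "F \<ge> 0"
  proof -
    have "F = (\<Sum>k\<in>S. (t k)\<^sup>2 * u k * (\<Sum>l\<in>S. real_of_int (A k l) * u l))"
      unfolding F_def a_def by (simp add: sum_distrib_left mult_ac)
    also have "\<dots> \<ge> 0"
      using u_pos Au by (intro sum_nonneg) (simp add: less_imp_le)
    finally show ?thesis .
  qed
  moreover have "F = (\<Sum>k\<in>S. \<Sum>l\<in>S. a k l * (t l)\<^sup>2)"
    unfolding F_def by (subst sum.swap) (simp add: a_def sym mult_ac)
  moreover have "restricted_form A S v = (\<Sum>k\<in>S. \<Sum>l\<in>S. a k l * (t k * t l))"
  proof -
    have "v k = u k * t k" if "k \<in> S" for k
      using u_pos[OF that] unfolding t_def by simp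
    then show ?thesis
      unfolding restricted_form_def a_def by (intro sum.cong refl) (simp add: mult_ac)
  qed
  moreover have "(\<Sum>k\<in>S. \<Sum>l\<in>S. a k l * (t k - t l)\<^sup>2)
      = F + (\<Sum>k\<in>S. \<Sum>l\<in>S. a k l * (t l)\<^sup>2) - 2 * (\<Sum>k\<in>S. \<Sum>l\<in>S. a k l * (t k * t l))"
    unfolding F_def by (simp add: power2_diff sum.distrib sum_subtractf sum_distrib_left algebra_simps)
  ultimately show ?thesis by linarith
qed

lemma restricted_form_disjoint_union:
  assumes "finite S1" "finite S2" "S1 \<inter> S2 = {}"
    and cross: "\<And>k l. k \<in> S1 \<Longrightarrow> l \<in> S2 \<Longrightarrow> A k l = 0 \<and> A l k = 0"
  shows "restricted_form A (S1 \<union> S2) v = restricted_form A S1 v + restricted_form A S2 v"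
proof -
  have "(\<Sum>k\<in>S1. \<Sum>l\<in>S2. v k * real_of_int (A k l) * v l) = 0"
       "(\<Sum>k\<in>S2. \<Sum>l\<in>S1. v k * real_of_int (A k l) * v l) = 0"
    using cross by (auto intro!: sum.neutral)
  then show ?thesis
    unfolding restricted_form_def using assms(1-3) by (simp add: sum.union_disjoint sum.distrib)
qed

lemma hdist_le_arcosh_sqrt_four_thirds:
  assumes "bform A p p < 0" and "bform A p q = bform A p p - c" "bform A q q = bform A p p - c"
    and "0 \<le> c" and "3 * c \<le> - bform A p p"
  shows "hdist A p q \<le> arcosh (sqrt (4/3))"
proof -
  define Q where "Q = bform A p p - c"
  have ratio: "(bform A p q)\<^sup>2 / (bform A p p * bform A q q) = Q / bform A p p"
    using assms unfolding Q_def by (simp add: power2_eq_square)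
  have "1 \<le> Q / bform A p p" "Q / bform A p p \<le> 4/3"
    using assms unfolding Q_def by (simp_all add: le_divide_eq divide_le_eq)
  then show ?thesis
    unfolding hdist_def ratio by (intro arcosh_mono_le) simp_all
qed

subsection \<open>Simply laced hyperbolic Cartan matrices\<close>

locale simply_laced_hyperbolic =
  fixes A :: "'i::finite \<Rightarrow> 'i \<Rightarrow> int"
  assumes simply_laced: "simply_laced A" and hyperbolic: "hyperbolic A"
begin

lemma cartan_diag: "A i i = 2"
  using simply_laced unfolding simply_laced_def by blast

lemma cartan_sym: "A i j = A j i"
  using simply_laced unfolding simply_laced_def by blast

lemma cartan_off_diag: "i \<noteq> j \<Longrightarrow> A i j = 0 \<or> A i j = -1"
  using simply_laced unfolding simply_laced_def by blast

lemma cartan_off_diag_nonpos: "i \<noteq> j \<Longrightarrow> A i j \<le> 0"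
  using cartan_off_diag by force

lemma bform_sym: "bform A x y = bform A y x"
  by (rule bform_commute[OF cartan_sym])

lemma dynkin_connected: "(k, l) \<in> {(k, l). dynkin_edge A k l}\<^sup>*"
  using hyperbolic unfolding hyperbolic_def connected_sub_def by auto

lemma restricted_form_nonneg_proper:
  "S \<noteq> UNIV \<Longrightarrow> restricted_form A S v \<ge> 0"
proof (induction "card S" arbitrary: S rule: less_induct)
  case less
  show ?case
  proof (cases "connected_sub A S")
    case True
    then have "finite_type A S \<or> affine_type A S"
      using hyperbolic less.prems unfolding hyperbolic_def by auto
    then obtain u :: "'i \<Rightarrow> real" where "\<And>k. k \<in> S \<Longrightarrow> u k > 0"
      and "\<And>k. k \<in> S \<Longrightarrow> (\<Sum>l\<in>S. real_of_int (A k l) * u l) \<ge> 0"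
      unfolding finite_type_def affine_type_def by (metis less_imp_le order_refl)
    then show ?thesis
      by (intro restricted_form_nonneg[where A=A and u=u, OF cartan_sym cartan_off_diag_nonpos]) auto
  next
    case False
    show ?thesis
    proof (cases "S = {}")
      case True
      then show ?thesis by (simp add: restricted_form_def)
    next
      case nonempty: False
      define R where "R = {(k, l). k \<in> S \<and> l \<in> S \<and> dynkin_edge A k l}"
      from False nonempty obtain i0 j0 where ij: "i0 \<in> S" "j0 \<in> S" "(i0, j0) \<notin> R\<^sup>*"
        unfolding connected_sub_def R_def by auto
      define S1 where "S1 = {k \<in> S. (i0, k) \<in> R\<^sup>*}"
      define S2 where "S2 = S - S1"
      have cross: "A k l = 0 \<and> A l k = 0" if "k \<in> S1" "l \<in> S2" for k l
      proof -
        have "A k l = 0"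
        proof (rule ccontr)
          assume "A k l \<noteq> 0"
          then have "(k, l) \<in> R"
            using that unfolding R_def S1_def S2_def dynkin_edge_def by auto
          then have "(i0, l) \<in> R\<^sup>*" using that unfolding S1_def by auto
          then show False using that unfolding S1_def S2_def by auto
        qed
        then show ?thesis using cartan_sym[of k l] by simp
      qed
      have S: "S = S1 \<union> S2" by (auto simp: S2_def S1_def)
      have "restricted_form A S v = restricted_form A S1 v + restricted_form A S2 v"
        unfolding S by (rule restricted_form_disjoint_union[OF _ _ _ cross]) (auto simp: S2_def)
      moreover have "card S1 < card S"
        by (rule psubset_card_mono) (use ij in \<open>auto simp: S1_def\<close>)
      moreover have "card S2 < card S"
        by (rule psubset_card_mono) (use ij in \<open>auto simp: S1_def S2_def\<close>)
      moreover have "S1 \<noteq> UNIV" "S2 \<noteq> UNIV"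
        using less.prems by (auto simp: S1_def S2_def)
      ultimately show ?thesis using less.hyps by (metis add_nonneg_nonneg)
    qed
  qed
qed

lemma bform_nonneg_if_coordinate_zero:
  assumes "v r = 0"
  shows "bform A v v \<ge> 0"
proof -
  have "bform A v v = (\<Sum>k\<in>UNIV-{r}. \<Sum>l\<in>UNIV. v k * real_of_int (A k l) * v l)"
    unfolding bform_def by (rule sum.mono_neutral_right) (auto simp: assms)
  also have "\<dots> = restricted_form A (UNIV - {r}) v"
    unfolding restricted_form_def
    by (intro sum.cong refl sum.mono_neutral_right) (auto simp: assms)
  also have "\<dots> \<ge> 0"
    by (rule restricted_form_nonneg_proper) auto
  finally show ?thesis .
qed

lemma radical_trivial:
  assumes pp: "bform A p p < 0" and rad: "\<And>k. bform A x (simple_root k) = 0"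
  shows "x k = 0"
proof (rule ccontr)
  assume xk: "x k \<noteq> 0"
  have x_orth: "bform A x y = 0" for y
    unfolding bform_expand_right[of A x y] using rad by simp
  define c where "c = p k / x k"
  have "bform A (\<lambda>m. 1 * p m + (-c) * x m) (\<lambda>m. 1 * p m + (-c) * x m) = bform A p p"
    unfolding bform_square_combination[OF cartan_sym] using x_orth bform_sym[of p x] by simp
  moreover have "bform A (\<lambda>m. 1 * p m + (-c) * x m) (\<lambda>m. 1 * p m + (-c) * x m) \<ge> 0"
    by (rule bform_nonneg_if_coordinate_zero[of _ k]) (use xk in \<open>simp add: c_def\<close>)
  ultimately show False using pp by simp
qed

lemma reverse_cauchy_schwarz:
  assumes pp: "bform A p p < 0"
  shows "bform A p p * bform A q q \<le> (bform A p q)\<^sup>2"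
proof (rule ccontr)
  assume neg: "\<not> ?thesis"
  obtain k where pk: "p k \<noteq> 0"
  proof -
    have "p \<noteq> (\<lambda>_. 0)" using pp by (auto simp: bform_def)
    then show ?thesis using that by auto
  qed
  define P M Q where "P = bform A p p" and "M = bform A p q" and "Q = bform A q q"
  define s t where "s = q k" and "t = - p k"
  have "bform A (\<lambda>m. s * p m + t * q m) (\<lambda>m. s * p m + t * q m) \<ge> 0"
    by (rule bform_nonneg_if_coordinate_zero[of _ k]) (simp add: s_def t_def)
  then have nonneg: "s\<^sup>2 * P + 2 * s * t * M + t\<^sup>2 * Q \<ge> 0"
    unfolding bform_square_combination[OF cartan_sym] P_def M_def Q_def .
  have "P * (s\<^sup>2 * P + 2 * s * t * M + t\<^sup>2 * Q) = (s * P + t * M)\<^sup>2 + t\<^sup>2 * (P * Q - M\<^sup>2)"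
    by (simp add: algebra_simps power2_eq_square)
  also have "\<dots> > 0"
    using pk neg by (intro add_nonneg_pos) (simp_all add: t_def P_def Q_def M_def)
  finally show False
    using nonneg pp by (simp add: P_def zero_less_mult_iff)
qed

lemma isotropic_orthogonal_coordinate_hyperplane:
  assumes "x r = 0" and xx: "bform A x x = 0" and "h r = 0"
  shows "bform A x h = 0"
proof -
  define c d where "c = bform A x h" and "d = bform A h h"
  have "d \<ge> 0" unfolding d_def by (rule bform_nonneg_if_coordinate_zero) fact
  \<comment> \<open>The test vector \<open>x + \<tau>h\<close> has norm \<open>-c\<^sup>2(d + 2)/(d + 1)\<^sup>2\<close>.\<close>
  define \<tau> where "\<tau> = - c / (d + 1)"
  have "bform A (\<lambda>m. 1 * x m + \<tau> * h m) (\<lambda>m. 1 * x m + \<tau> * h m) \<ge> 0"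
    by (rule bform_nonneg_if_coordinate_zero[of _ r]) (simp add: assms)
  then have "2 * \<tau> * c + \<tau>\<^sup>2 * d \<ge> 0"
    unfolding bform_square_combination[OF cartan_sym] xx c_def d_def by simp
  moreover have "(2 * \<tau> * c + \<tau>\<^sup>2 * d) * (d + 1)\<^sup>2 = - (c\<^sup>2 * (d + 2))"
  proof -
    have \<tau>: "\<tau> * (d + 1) = - c" using \<open>d \<ge> 0\<close> unfolding \<tau>_def by simp
    have "(2 * \<tau> * c + \<tau>\<^sup>2 * d) * (d + 1)\<^sup>2
        = 2 * c * (d + 1) * (\<tau> * (d + 1)) + d * (\<tau> * (d + 1))\<^sup>2"
      by (simp add: algebra_simps power2_eq_square)
    then show ?thesis unfolding \<tau> by (simp add: algebra_simps power2_eq_square)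
  qed
  ultimately have "c\<^sup>2 * (d + 2) \<le> 0"
    by (metis neg_0_le_iff_le zero_le_mult_iff zero_le_power2)
  then show ?thesis
    using \<open>d \<ge> 0\<close> unfolding c_def by (simp add: mult_le_0_iff)
qed

lemma bform_nonpos_disjoint_supports:
  assumes "\<And>k. u k \<ge> 0" "\<And>k. v k \<ge> 0" and "\<And>k. u k * v k = 0"
  shows "bform A u v \<le> 0"
  unfolding bform_def
proof (intro sum_nonpos)
  fix i j
  show "u i * real_of_int (A i j) * v j \<le> 0"
    using assms(1)[of i] assms(2)[of j] assms(3)[of j] cartan_off_diag_nonpos[of i j]
    by (cases "i = j") (auto simp: mult_nonneg_nonpos mult_nonpos_nonneg)
qed

lemma bform_simple_root_nonpos_at_zero:
  assumes "\<And>k. u k \<ge> 0" and "u l = 0"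
  shows "bform A u (simple_root l) \<le> 0"
  unfolding bform_simple_root_right
proof (intro sum_nonpos)
  fix i
  show "u i * real_of_int (A i l) \<le> 0"
    using assms cartan_off_diag_nonpos[of i l] by (cases "i = l") (simp_all add: mult_nonneg_nonpos)
qed

lemma chamber_nonpos_if_negative_coordinate:
  assumes pp: "bform A p p < 0" and xC: "x \<in> chamber A" and "x r < 0"
  shows "x k \<le> 0"
proof -
  \<comment> \<open>The positive part \<open>xp\<close> of \<open>x\<close> turns out to lie in the radical of the form.\<close>
  define xp where "xp m = max (x m) 0" for m
  define xm where "xm m = max (- x m) 0" for m
  have x_roots: "bform A x (simple_root m) \<le> 0" for m
    using xC unfolding chamber_def by auto
  have "bform A xp x \<le> 0"
    unfolding bform_expand_left[of A xp x] using x_roots bform_sym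
    by (intro sum_nonpos) (simp add: xp_def mult_nonneg_nonpos)
  moreover have "bform A xp xm \<le> 0"
    by (rule bform_nonpos_disjoint_supports) (auto simp: xp_def xm_def)
  moreover have "bform A xp xp = bform A xp x + bform A xp xm"
  proof -
    have "xp = (\<lambda>k. 1 * x k + 1 * xm k)" by (auto simp: fun_eq_iff xp_def xm_def)
    then show ?thesis using bform_linear_right[of A xp 1 x 1 xm] by simp
  qed
  moreover have xp_r: "xp r = 0" using \<open>x r < 0\<close> by (simp add: xp_def)
  then have "bform A xp xp \<ge> 0" by (rule bform_nonneg_if_coordinate_zero)
  ultimately have xp_xp: "bform A xp xp = 0" and xp_xm: "bform A xp xm = 0" by linarith+
  have "bform A xp (simple_root m) = 0" for m
  proof (cases "m = r")
    case False
    show ?thesis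
      by (rule isotropic_orthogonal_coordinate_hyperplane[OF xp_r xp_xp])
         (use False in \<open>simp add: simple_root_def\<close>)
  next
    case True
    \<comment> \<open>\<open>xp\<cdot>xm = \<Sum>\<^sub>l xm\<^sub>l (xp\<cdot>\<alpha>\<^sub>l)\<close> is a sum of nonpositive terms, and \<open>xm\<^sub>r > 0\<close>.\<close>
    have terms: "xm l * bform A xp (simple_root l) \<le> 0" for l
      using bform_simple_root_nonpos_at_zero[of xp l]
      by (cases "x l < 0") (auto simp: xp_def xm_def mult_nonpos_nonpos)
    have "(\<Sum>l\<in>UNIV. xm l * bform A xp (simple_root l)) = 0"
      using xp_xm unfolding bform_expand_right[of A xp xm] .
    then have "xm r * bform A xp (simple_root r) = 0"
      using sum_nonpos_eq_0_iff[of UNIV "\<lambda>l. xm l * bform A xp (simple_root l)"] terms by simp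
    then show ?thesis using True \<open>x r < 0\<close> by (simp add: xm_def)
  qed
  then have "xp k = 0" by (rule radical_trivial[OF pp])
  then show ?thesis by (simp add: xp_def)
qed

lemma positive_if_nonneg_supersolution:
  assumes u_nonneg: "\<And>k. u k \<ge> 0" and Au: "\<And>k. (\<Sum>l\<in>UNIV. real_of_int (A k l) * u l) \<ge> 0"
    and "u r > 0"
  shows "u k > 0"
proof -
  have zero_step: "u l = 0" if "u k' = 0" "dynkin_edge A k' l" for k' l
  proof -
    have terms: "real_of_int (A k' i) * u i \<le> 0" for i
      using cartan_off_diag_nonpos[of k' i] u_nonneg[of i] \<open>u k' = 0\<close>
      by (cases "i = k'") (auto intro: mult_nonpos_nonneg)
    then have "(\<Sum>i\<in>UNIV. real_of_int (A k' i) * u i) = 0"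
      using Au[of k'] by (meson antisym sum_nonpos)
    then have "real_of_int (A k' l) * u l = 0"
      using sum_nonpos_eq_0_iff[of UNIV "\<lambda>i. real_of_int (A k' i) * u i"] terms by simp
    then show ?thesis using that(2) unfolding dynkin_edge_def by simp
  qed
  have "u k = 0 \<Longrightarrow> u r = 0"
    using dynkin_connected[of k r] by induction (auto intro: zero_step)
  then show ?thesis using u_nonneg[of k] \<open>u r > 0\<close> by fastforce
qed

lemma chamber_coordinate_nonneg:
  assumes pp: "bform A p p < 0" and xC: "x \<in> chamber A"
  shows "x k \<ge> 0"
proof (rule ccontr)
  assume "\<not> x k \<ge> 0"
  \<comment> \<open>Then \<open>-x\<close> is a nonnegative, hence positive, supersolution, and the form is semidefinite.\<close>
  then have x_nonpos: "x m \<le> 0" for m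
    using chamber_nonpos_if_negative_coordinate[OF pp xC, of k m] by simp
  have Ax: "(\<Sum>l\<in>UNIV. real_of_int (A m l) * - x l) \<ge> 0" for m
  proof -
    have "(\<Sum>l\<in>UNIV. real_of_int (A m l) * - x l) = - bform A x (simple_root m)"
      unfolding bform_simple_root_right by (simp add: sum_negf cartan_sym[of m] mult_ac)
    then show ?thesis using xC unfolding chamber_def by simp
  qed
  have u_pos: "- x m > 0" for m
    using positive_if_nonneg_supersolution[where u="\<lambda>l. - x l" and r=k and k=m] x_nonpos Ax
      \<open>\<not> x k \<ge> 0\<close> by simp
  have "restricted_form A UNIV p \<ge> 0"
    by (rule restricted_form_nonneg[where A=A and u="\<lambda>l. - x l", OF cartan_sym
          cartan_off_diag_nonpos finite u_pos Ax])
  then show False using pp by (simp add: bform_eq_restricted_form)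
qed

lemma chamber_bform_nonpos:
  assumes pp: "bform A p p < 0" and "x \<in> chamber A" "y \<in> chamber A"
  shows "bform A x y \<le> 0"
  unfolding bform_expand_left[of A x y]
proof (intro sum_nonpos)
  fix k
  have "x k \<ge> 0" by (rule chamber_coordinate_nonneg[OF pp \<open>x \<in> chamber A\<close>])
  moreover have "bform A (simple_root k) y \<le> 0"
    using \<open>y \<in> chamber A\<close> bform_sym[of "simple_root k" y] unfolding chamber_def by simp
  ultimately show "x k * bform A (simple_root k) y \<le> 0" by (simp add: mult_nonneg_nonpos)
qed

lemma exists_fundamental_weight:
  assumes pp: "bform A p p < 0"
  shows "\<exists>w. \<forall>k. bform A w (simple_root k) = (if k = i then 1 else 0)"
proof -
  define L :: "real^'i \<Rightarrow> real^'i" where "L v = (\<chi> k. \<Sum>l\<in>UNIV. real_of_int (A k l) * v$l)" for v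
  have lin: "linear L"
    by (rule linearI) (simp_all add: L_def vec_eq_iff sum.distrib distrib_left sum_distrib_left mult.left_commute)
  have bform_L: "bform A (\<lambda>k. v$k) (simple_root m) = L v $ m" for v m
    unfolding bform_simple_root_right L_def by (simp, intro sum.cong refl) (metis cartan_sym mult.commute)
  have "inj L"
    unfolding linear_injective_0[OF lin]
  proof (intro allI impI)
    fix v assume "L v = 0"
    then have "bform A (\<lambda>k. v$k) (simple_root m) = 0" for m by (simp add: bform_L)
    then have "v$m = 0" for m using radical_trivial[OF pp] by blast
    then show "v = 0" by (simp add: vec_eq_iff)
  qed
  then have "surj L" using linear_injective_imp_surjective[OF lin] by auto
  then obtain v where "L v = (\<chi> k. if k = i then 1 else 0)" by (metis surjE)
  then show ?thesis by (intro exI[of _ "\<lambda>k. v$k"] allI) (simp add: bform_L)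
qed

lemma hdist_nonneg:
  assumes pp: "bform A p p < 0" and qq: "bform A q q < 0"
  shows "hdist A p q \<ge> 0"
proof -
  have "bform A p p * bform A q q > 0" using pp qq by (simp add: mult_neg_neg)
  then have "1 \<le> (bform A p q)\<^sup>2 / (bform A p p * bform A q q)"
    using reverse_cauchy_schwarz[OF pp, of q] by (simp add: le_divide_eq)
  then show ?thesis unfolding hdist_def by simp
qed

lemma exists_neighbour: "\<exists>j. j \<noteq> i \<and> A i j = -1"
proof (cases "\<exists>k. k \<noteq> i")
  case True
  then obtain k where "k \<noteq> i" by auto
  with dynkin_connected[of i k] obtain c where "dynkin_edge A i c"
    by (auto elim: converse_rtranclE)
  then show ?thesis using cartan_off_diag[of i c] unfolding dynkin_edge_def by auto
next
  case False
  then have "UNIV = {i}" by auto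
  have "0 < (\<Sum>j\<in>UNIV. real_of_int (A k j) * 1)" for k
  proof -
    have "k = i" using False by auto
    then show ?thesis by (simp add: \<open>UNIV = {i}\<close> cartan_diag)
  qed
  then have "finite_type A UNIV"
    unfolding finite_type_def by (intro exI[of _ "\<lambda>_. 1"]) simp
  then show ?thesis using hyperbolic unfolding hyperbolic_def by blast
qed

lemma two_sq_le_neg_bform_if_neighbours_bounded:
  assumes pp: "bform A p p < 0" and pC: "p \<in> chamber A" and p_i: "bform A p (simple_root i) = 0"
    and "0 \<le> m" and m_le: "\<And>k. k \<noteq> i \<Longrightarrow> A i k = -1 \<Longrightarrow> bform A p (simple_root k) \<le> - m"
  shows "2 * m\<^sup>2 \<le> - bform A p p"
proof -
  obtain w where w: "\<And>k. bform A w (simple_root k) = (if k = i then 1 else 0)"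
    using exists_fundamental_weight[OF pp] by blast
  have "(\<lambda>k. - w k) \<in> chamber A"
    unfolding chamber_def by (simp add: bform_uminus_left w)
  then have "bform A w w \<le> 0"
    using chamber_bform_nonpos[OF pp] bform_uminus_left bform_sym by (metis minus_minus neg_0_le_iff_le)
  define b where "b k = 1 * simple_root i k + (-2) * w k" for k
  have b_root: "bform A b (simple_root k) = real_of_int (A i k) - (if k = i then 2 else 0)" for k
    unfolding b_def[abs_def] bform_linear_left bform_simple_roots w by simp
  have bC: "b \<in> chamber A"
    unfolding chamber_def using b_root cartan_diag cartan_off_diag_nonpos by auto
  have bb: "bform A b b \<le> -2"
  proof -
    have "bform A (simple_root i) w = 1" using bform_sym[of "simple_root i" w] w[of i] by simp
    then show ?thesis using \<open>bform A w w \<le> 0\<close>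
      unfolding b_def[abs_def] bform_square_combination[OF cartan_sym]
      by (simp add: bform_simple_roots cartan_diag)
  qed
  define a where "a k = 1 * p k + (- m) * b k" for k
  have "a \<in> chamber A"
    unfolding chamber_def
  proof (intro CollectI allI)
    fix k
    have "bform A a (simple_root k) = bform A p (simple_root k) - m * bform A b (simple_root k)"
      unfolding a_def[abs_def] bform_linear_left by simp
    moreover have "bform A p (simple_root k) \<le> 0" using pC unfolding chamber_def by simp
    ultimately show "bform A a (simple_root k) \<le> 0"
      using p_i m_le[of k] cartan_diag[of i] cartan_off_diag[of i k] b_root[of k]
      by (cases "k = i") auto
  qed
  have "bform A p p = bform A (\<lambda>k. 1 * a k + m * b k) (\<lambda>k. 1 * a k + m * b k)"
    by (simp add: a_def)
  also have "\<dots> = 1\<^sup>2 * bform A a a + 2 * 1 * m * bform A a b + m\<^sup>2 * bform A b b"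
    by (rule bform_square_combination[OF cartan_sym])
  also have "\<dots> \<le> m\<^sup>2 * (-2)"
  proof -
    have "bform A a a \<le> 0" "bform A a b \<le> 0"
      using chamber_bform_nonpos[OF pp \<open>a \<in> chamber A\<close>] bC \<open>a \<in> chamber A\<close> by auto
    then have "m * bform A a b \<le> 0" using \<open>0 \<le> m\<close> by (simp add: mult_nonneg_nonpos)
    moreover have "m\<^sup>2 * bform A b b \<le> m\<^sup>2 * (-2)" using mult_left_mono[OF bb, of "m\<^sup>2"] by simp
    ultimately show ?thesis using \<open>bform A a a \<le> 0\<close> by simp
  qed
  finally show ?thesis by simp
qed

lemma exists_near_point_on_common_facet:
  assumes p: "p \<in> facet_pts A i" and j: "j \<noteq> i" "A i j = -1"
    and j_max: "\<And>k. k \<noteq> i \<Longrightarrow> A i k = -1 \<Longrightarrow>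
      bform A p (simple_root k) \<le> bform A p (simple_root j)"
  shows "\<exists>q \<in> facet_pts A i \<inter> facet_pts A j. hdist A p q \<le> arcosh (sqrt (4/3))"
proof -
  have pC: "p \<in> chamber A" and pp: "bform A p p < 0" and p_i: "bform A p (simple_root i) = 0"
    using p unfolding facet_pts_def by auto
  have p_roots: "bform A p (simple_root k) \<le> 0" for k using pC unfolding chamber_def by auto
  define m where "m = - bform A p (simple_root j)"
  have "0 \<le> m" using p_roots[of j] by (simp add: m_def)
  have m_bound: "2 * m\<^sup>2 \<le> - bform A p p"
    by (rule two_sq_le_neg_bform_if_neighbours_bounded[OF pp pC p_i \<open>0 \<le> m\<close>])
       (simp add: m_def j_max)
  define r where "r k = 1 * simple_root j k + (1/2) * simple_root i k" for k
  define q where "q k = 1 * p k + (2 * m / 3) * r k" for k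
  have q_roots: "bform A q (simple_root k)
      = bform A p (simple_root k) + 2 * m / 3 * (real_of_int (A j k) + real_of_int (A i k) / 2)" for k
    unfolding q_def[abs_def] r_def[abs_def] bform_linear_left bform_simple_roots by simp
  have q_i: "bform A q (simple_root i) = 0" and q_j: "bform A q (simple_root j) = 0"
    using q_roots[of i] q_roots[of j] p_i j cartan_diag cartan_sym[of i j] by (simp_all add: m_def)
  have "q \<in> chamber A"
    unfolding chamber_def
  proof (intro CollectI allI)
    fix k
    show "bform A q (simple_root k) \<le> 0"
    proof (cases "k = i \<or> k = j")
      case True
      then show ?thesis using q_i q_j by auto
    next
      case False
      then show ?thesis
        using q_roots[of k] p_roots[of k] \<open>0 \<le> m\<close>
          cartan_off_diag_nonpos[of j k] cartan_off_diag_nonpos[of i k]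
        by (auto intro!: add_nonpos_nonpos mult_nonneg_nonpos)
    qed
  qed
  have p_r: "bform A p r = - m"
    unfolding r_def[abs_def] bform_linear_right p_i by (simp add: m_def)
  have r_r: "bform A r r = 3/2"
    unfolding r_def[abs_def] bform_square_combination[OF cartan_sym] bform_simple_roots
    using j cartan_diag cartan_sym[of i j] by (simp add: power2_eq_square)
  have p_q: "bform A p q = bform A p p - 2/3 * m\<^sup>2"
    unfolding q_def[abs_def] bform_linear_right p_r by (simp add: power2_eq_square)
  have q_q: "bform A q q = bform A p p - 2/3 * m\<^sup>2"
    unfolding q_def[abs_def] bform_square_combination[OF cartan_sym] p_r r_r
    by (simp add: power2_eq_square field_simps)
  have "bform A q q < 0" using q_q pp zero_le_power2[of m] by linarith
  then have "q \<in> facet_pts A i \<inter> facet_pts A j"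
    unfolding facet_pts_def using \<open>q \<in> chamber A\<close> q_i q_j by auto
  moreover have "hdist A p q \<le> arcosh (sqrt (4/3))"
    by (rule hdist_le_arcosh_sqrt_four_thirds[OF pp p_q q_q]) (use m_bound in simp_all)
  ultimately show ?thesis by blast
qed

end

theorem lemma2p2:
  fixes A :: "'i::finite \<Rightarrow> 'i \<Rightarrow> int" and i :: 'i and p :: "'i \<Rightarrow> real"
  assumes "simply_laced A" and "hyperbolic A"
    and "p \<in> facet_pts A i"
  shows "\<exists>j. j \<noteq> i \<and> A i j = -1 \<and>
           facet_pts A i \<inter> facet_pts A j \<noteq> {} \<and>
           Inf (hdist A p ` (facet_pts A i \<inter> facet_pts A j)) \<le> arcosh (sqrt (4/3))"
proof -
  interpret simply_laced_hyperbolic A using assms(1,2) by unfold_locales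
  define N where "N = {j. j \<noteq> i \<and> A i j = -1}"
  define f where "f k = bform A p (simple_root k)" for k
  have "N \<noteq> {}" using exists_neighbour[of i] by (auto simp: N_def)
  then have "Max (f ` N) \<in> f ` N" by (intro Max_in) auto
  then obtain j where "j \<in> N" and "f j = Max (f ` N)" by auto
  then obtain q where q: "q \<in> facet_pts A i \<inter> facet_pts A j" "hdist A p q \<le> arcosh (sqrt (4/3))"
    using exists_near_point_on_common_facet[OF assms(3), of j] Max_ge[of "f ` N"]
    by (auto simp: N_def f_def)
  have "bdd_below (hdist A p ` (facet_pts A i \<inter> facet_pts A j))"
    using assms(3) hdist_nonneg by (intro bdd_belowI[of _ 0]) (auto simp: facet_pts_def)
  then have "Inf (hdist A p ` (facet_pts A i \<inter> facet_pts A j)) \<le> hdist A p q"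
    using q(1) by (intro cInf_lower) auto
  then show ?thesis using \<open>j \<in> N\<close> q by (intro exI[of _ j]) (auto simp: N_def)
qed

end
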